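(* Let $n\ge2$, and let $\mathcal K\subseteq\mathbb C^n$ be a subset such that for every $V\in\mathcal Z_n$ the set $\mathcal K\cap P^{-1}(V)$ has exactly one element. Then $\mathcal K$ is not closed in $(\mathbb C^n,d_\infty)$.
   Context: $\mathcal Z_n$ denotes the family of all multisets of complex numbers with exactly $n$ elements counted with multiplicity. $\mathbb C^n$ carries the metric $d_\infty(\mathbf u,\mathbf v)=\max_j|u_j-v_j|$. The map $P:\mathbb C^n\to\mathcal Z_n$ sends $(v_1,\dots,v_n)$ to the multiset $\{v_1,\dots,v_n\}$ (with multiplicities); thus the hypothesis says $\mathcal K$ contains exactly one ordering of each multiset of $n$ complex numbers. *)

theory Defs
  imports "HOL-Analysis.Analysis" "HOL-Library.Multiset"
begin

text \<open>Points of C^n are vectors of type complex^'n, with n = CARD('n).\<close>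

definition dinf :: "complex^'n \<Rightarrow> complex^'n \<Rightarrow> real" where
  "dinf u v = Max (range (\<lambda>j. cmod (u $ j - v $ j)))"

definition dinf_closed :: "(complex^'n) set \<Rightarrow> bool" where
  "dinf_closed K \<longleftrightarrow>
     (\<forall>x. (\<forall>e>0. \<exists>y\<in>K. dinf x y < e) \<longrightarrow> x \<in> K)"

definition Pmset :: "complex^'n \<Rightarrow> complex multiset" where
  "Pmset v = image_mset (\<lambda>j. v $ j) (mset_set (UNIV :: 'n set))"

definition Zn :: "nat \<Rightarrow> complex multiset set" where
  "Zn n = {V. size V = n}"

end

theory Submission
  imports Defs
begin

text \<open>For z on the unit circle, the fibre of P over the multiset
  {z, -z, 0, ..., 0} consists of the vectors with z in some position j, -z in another
  position k and 0 elsewhere, so K selects one ordered pair (j, k) for each such z.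
  These vectors depend continuously on z and K is closed, so along the half circle
  z = exp(i pi t), 0 \<le> t \<le> 1, the selected pair cannot jump: by connectedness
  of [0, 1] it is constant. At t = 1 the vector with (-1, 1) in positions (j, k) is the
  vector with (1, -1) in positions (k, j), so K would contain two orderings of
  {1, -1, 0, ..., 0}.\<close>

lemma selection_constant_on_connected:
  fixes \<gamma> :: "'i \<Rightarrow> 'b::topological_space \<Rightarrow> 'a::topological_space"
  assumes "connected S" and "finite I" and "closed K"
    and cont: "\<And>q. q \<in> I \<Longrightarrow> continuous_on S (\<gamma> q)"
    and select: "\<And>t. t \<in> S \<Longrightarrow> \<exists>!q\<in>I. \<gamma> q t \<in> K"
    and "p \<in> I" "s \<in> S" "\<gamma> p s \<in> K" "t \<in> S"
  shows "\<gamma> p t \<in> K"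
proof -
  have ex: "\<exists>q\<in>I. \<gamma> q t \<in> K" if "t \<in> S" for t
    using select[OF that] unfolding bex1_def by blast
  have unique: "q = r" if "t \<in> S" "q \<in> I" "r \<in> I" "\<gamma> q t \<in> K" "\<gamma> r t \<in> K" for t q r
    using select[OF that(1)] that(2-5) unfolding bex1_def by blast
  define A where "A = S \<inter> \<gamma> p -` K"
  define C where "C = (\<Union>q\<in>I - {p}. S \<inter> \<gamma> q -` K)"
  have "closedin (top_of_set S) A"
    unfolding A_def using cont \<open>p \<in> I\<close> \<open>closed K\<close> by (simp add: continuous_closedin_preimage)
  moreover have "closedin (top_of_set S) C"
    unfolding C_def using cont \<open>finite I\<close> \<open>closed K\<close>
    by (intro closedin_Union) (auto simp: continuous_closedin_preimage)
  moreover have "S \<subseteq> A \<union> C"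
    unfolding A_def C_def using ex by fastforce
  moreover have "A \<inter> C = {}"
    unfolding A_def C_def using unique \<open>p \<in> I\<close> by fastforce
  moreover have "A \<noteq> {}"
    unfolding A_def using \<open>s \<in> S\<close> \<open>\<gamma> p s \<in> K\<close> by blast
  ultimately have "C = {}"
    using \<open>connected S\<close> unfolding connected_closedin by meson
  then show ?thesis
    using \<open>S \<subseteq> A \<union> C\<close> \<open>t \<in> S\<close> unfolding A_def by blast
qed

lemma dinf_le_dist: "dinf u v \<le> dist u v"
  unfolding dinf_def
proof (rule Max.boundedI)
  fix x assume "x \<in> range (\<lambda>j. cmod (u $ j - v $ j))"
  then obtain j where "x = norm ((u - v) $ j)" by auto
  also have "\<dots> \<le> norm (u - v)" by (rule Finite_Cartesian_Product.norm_nth_le)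
  finally show "x \<le> dist u v"
    by (simp add: dist_norm)
qed auto

lemma dinf_closed_imp_closed:
  assumes "dinf_closed K"
  shows "closed K"
proof -
  have "x \<in> K" if "x \<in> closure K" for x
  proof -
    have "\<exists>y\<in>K. dinf x y < e" if "e > 0" for e
      using closure_approachableD[OF \<open>x \<in> closure K\<close> \<open>e > 0\<close>] dinf_le_dist
      by (metis dist_commute le_less_trans)
    then show ?thesis
      using assms unfolding dinf_closed_def by blast
  qed
  then show ?thesis
    using closure_subset_eq by blast
qed

lemma count_Pmset: "count (Pmset v) x = card {i. v $ i = x}"
  unfolding Pmset_def by (simp add: count_image_mset vimage_def)

lemma Pmset_in_Zn: "Pmset (v :: complex^'n) \<in> Zn CARD('n)"
  unfolding Pmset_def Zn_def by simp

definition dipole :: "complex \<Rightarrow> 'n \<Rightarrow> 'n \<Rightarrow> complex^'n" where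
  "dipole z j k = (\<chi> i. if i = j then z else if i = k then -z else 0)"

lemma continuous_on_dipole:
  assumes "continuous_on S f"
  shows "continuous_on S (\<lambda>t. dipole (f t) j k)"
  unfolding dipole_def
proof (rule continuous_on_vec_lambda)
  show "continuous_on S (\<lambda>t. if i = j then f t else if i = k then - f t else 0)" for i
    using assms by (cases "i = j"; cases "i = k") (auto intro!: continuous_intros)
qed

lemma dipole_uminus: "j \<noteq> k \<Longrightarrow> dipole (-z) j k = dipole z k j"
  unfolding dipole_def vec_eq_iff by auto

lemma dipole_eq_iff:
  assumes "z \<noteq> 0" "j \<noteq> k" "j' \<noteq> k'"
  shows "dipole z j k = dipole z j' k' \<longleftrightarrow> j = j' \<and> k = k'"
proof
  assume eq: "dipole z j k = dipole z j' k'"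
  have "z \<noteq> -z" using \<open>z \<noteq> 0\<close> by simp
  then show "j = j' \<and> k = k'"
    using eq[THEN arg_cong[where f = "\<lambda>v. v $ j"]] eq[THEN arg_cong[where f = "\<lambda>v. v $ k"]]
      assms by (auto simp: dipole_def split: if_splits)
qed simp

lemma dipole_level_set:
  assumes "z \<noteq> 0" "j \<noteq> k"
  shows "{i. dipole z j k $ i = x} =
    (if x = z then {j} else if x = -z then {k} else if x = 0 then - {j, k} else {})"
  using assms by (auto simp: dipole_def)

lemma Pmset_dipole:
  fixes j k :: "'n::finite"
  assumes "z \<noteq> 0" "j \<noteq> k"
  shows "Pmset (dipole z j k) = {#z, -z#} + replicate_mset (CARD('n) - 2) 0"
proof (rule multiset_eqI)
  fix x
  have "card (- {j, k}) = CARD('n) - 2"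
    using \<open>j \<noteq> k\<close> by (simp add: Compl_eq_Diff_UNIV card_Diff_subset)
  then show "count (Pmset (dipole z j k)) x = count ({#z, -z#} + replicate_mset (CARD('n) - 2) 0) x"
    using assms unfolding count_Pmset dipole_level_set[OF assms] by auto
qed

lemma Pmset_eq_dipoleD:
  assumes "z \<noteq> 0" "j \<noteq> k" and "Pmset v = Pmset (dipole z j k)"
  shows "\<exists>j' k'. j' \<noteq> k' \<and> v = dipole z j' k'"
proof -
  have level: "card {i. v $ i = x} = card {i. dipole z j k $ i = x}" for x
    using assms(3) by (metis count_Pmset)
  have "card {i. v $ i = z} = 1" "card {i. v $ i = -z} = 1"
    using level[of z] level[of "-z"] unfolding dipole_level_set[OF assms(1,2)] by simp_all
  then obtain j' k' where j': "{i. v $ i = z} = {j'}" and k': "{i. v $ i = -z} = {k'}"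
    by (meson card_1_singletonE)
  have "v $ i = 0" if "i \<noteq> j'" "i \<noteq> k'" for i
  proof (rule ccontr)
    assume "v $ i \<noteq> 0"
    moreover have "v $ i \<noteq> z" "v $ i \<noteq> -z" using j' k' that by blast+
    ultimately have "card {l. v $ l = v $ i} = 0"
      using level[of "v $ i"] unfolding dipole_level_set[OF assms(1,2)] by simp
    then show False
      by (simp add: card_eq_0_iff) blast
  qed
  then have "v = dipole z j' k'"
    using j' k' unfolding dipole_def vec_eq_iff by auto
  moreover have "j' \<noteq> k'"
  proof
    assume "j' = k'"
    moreover have "v $ j' = z" "v $ k' = -z" using j' k' by auto
    ultimately have "z = -z" by simp
    then show False using \<open>z \<noteq> 0\<close> by simp
  qed
  ultimately show ?thesis by blast
qed

lemma transversal_ex1_dipole: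
  fixes K :: "(complex^'n::finite) set" and j k :: 'n
  assumes transversal: "\<And>u :: complex^'n. \<exists>!v. v \<in> K \<and> Pmset v = Pmset u"
    and "z \<noteq> 0" "j \<noteq> k"
  shows "\<exists>!p\<in>{p. fst p \<noteq> snd p}. dipole z (fst p) (snd p) \<in> K"
proof -
  obtain v where "v \<in> K" "Pmset v = Pmset (dipole z j k)"
    using transversal by blast
  then obtain j' k' where "j' \<noteq> k'" "dipole z j' k' \<in> K"
    using Pmset_eq_dipoleD[OF \<open>z \<noteq> 0\<close> \<open>j \<noteq> k\<close>] by blast
  moreover have "p = q"
    if "fst p \<noteq> snd p" "fst q \<noteq> snd q"
      "dipole z (fst p) (snd p) \<in> K" "dipole z (fst q) (snd q) \<in> K" for p q :: "'n \<times> 'n"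
  proof -
    have "Pmset (dipole z (fst p) (snd p)) = Pmset (dipole z (fst q) (snd q))"
      using \<open>z \<noteq> 0\<close> that(1,2) by (simp add: Pmset_dipole)
    then have "dipole z (fst p) (snd p) = dipole z (fst q) (snd q)"
      using transversal[of "dipole z (fst p) (snd p)"] that(3,4) by (elim ex1E) metis
    then show ?thesis
      using \<open>z \<noteq> 0\<close> that(1,2) by (simp add: dipole_eq_iff prod_eq_iff)
  qed
  ultimately show ?thesis
    unfolding bex1_def by (intro conjI bexI[of _ "(j', k')"] ballI impI) auto
qed

theorem theorem4p2:
  fixes K :: "(complex^'n) set"
  assumes "CARD('n) \<ge> 2"
    and "\<forall>V\<in>Zn CARD('n). \<exists>!v. v \<in> K \<and> Pmset v = V"
  shows "\<not> dinf_closed K"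
proof
  assume "dinf_closed K"
  have transversal: "\<exists>!v. v \<in> K \<and> Pmset v = Pmset u" for u :: "complex^'n"
    by (rule bspec[OF assms(2) Pmset_in_Zn])
  have "\<not> CARD('n) \<le> Suc 0"
    using assms(1) by simp
  then obtain a b :: 'n where "a \<noteq> b"
    by (auto simp: card_le_Suc0_iff_eq)
  define I where "I = {p :: 'n \<times> 'n. fst p \<noteq> snd p}"
  define \<gamma> where "\<gamma> p t = dipole (cis (pi * t)) (fst p) (snd p)" for p :: "'n \<times> 'n" and t
  have select: "\<exists>!p\<in>I. \<gamma> p t \<in> K" for t
    unfolding I_def \<gamma>_def by (rule transversal_ex1_dipole[OF transversal cis_neq_zero \<open>a \<noteq> b\<close>])
  obtain p where "p \<in> I" "\<gamma> p 0 \<in> K"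
    using select[of 0] by blast
  then obtain j k where "(j, k) \<in> I" "\<gamma> (j, k) 0 \<in> K"
    by (cases p) simp
  have "\<gamma> (j, k) 1 \<in> K"
  proof (rule selection_constant_on_connected[where S = "{0..1}" and I = I and \<gamma> = \<gamma> and s = 0])
    show "continuous_on {0..1} (\<gamma> q)" for q
      unfolding \<gamma>_def by (intro continuous_on_dipole continuous_intros)
    show "closed K"
      using \<open>dinf_closed K\<close> by (rule dinf_closed_imp_closed)
  qed (simp_all add: select \<open>(j, k) \<in> I\<close> \<open>\<gamma> (j, k) 0 \<in> K\<close>)
  then have "\<gamma> (k, j) 0 \<in> K"
    using \<open>(j, k) \<in> I\<close> by (simp add: \<gamma>_def I_def dipole_uminus)
  moreover have "(k, j) \<in> I"
    using \<open>(j, k) \<in> I\<close> by (simp add: I_def)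
  ultimately have "(j, k) = (k, j)"
    using select[of 0] \<open>(j, k) \<in> I\<close> \<open>\<gamma> (j, k) 0 \<in> K\<close> unfolding bex1_def by blast
  then have "j = k"
    unfolding prod.inject by (rule conjunct1)
  with \<open>(j, k) \<in> I\<close> show False
    by (simp add: I_def)
qed

end
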